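(* Let $0<\alpha<1$ and $\lambda>0$, and let $\{M_{\alpha,\lambda}(t)\}_{t\ge0}$ be a Lévy process whose marginals have Laplace transform $\mathbb{E}\, e^{-uM_{\alpha,\lambda}(t)}=\left(\frac{\lambda}{\lambda+u^{\alpha}}\right)^{t}$ for $u\ge 0$, $t\ge 0$. Let $S_\alpha(1)$ be a positive random variable with $\mathbb{E}\,e^{-uS_\alpha(1)}=e^{-u^\alpha}$, $u\ge0$. Then $$\frac{\lambda^{1/\alpha}M_{\alpha,\lambda}(t)}{t^{1/\alpha}}\ \xrightarrow{d}\ S_\alpha(1)\qquad\text{as } t\to\infty.$$
   Context: Such a process (the Mittag-Leffler Lévy process) can be realized as $M_{\alpha,\lambda}(t)=S_\alpha(G_{\lambda,1}(t))$, where $S_\alpha$ is an $\alpha$-stable subordinator with $\mathbb{E}e^{-uS_\alpha(t)}=e^{-tu^\alpha}$ and $G_{\lambda,1}$ is an independent gamma Lévy process with $G_{\lambda,1}(t)$ having density $\frac{\lambda^{t}}{\Gamma(t)}y^{t-1}e^{-\lambda y}$, $y>0$. *)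

theory Defs
  imports "HOL-Probability.Probability"
begin

definition levy_process :: "'a measure \<Rightarrow> (real \<Rightarrow> 'a \<Rightarrow> real) \<Rightarrow> bool" where
  "levy_process M X \<longleftrightarrow>
     prob_space M \<and>
     (\<forall>t\<ge>0. X t \<in> borel_measurable M) \<and>
     (AE \<omega> in M. X 0 \<omega> = 0) \<and>
     (\<forall>(n::nat) (ts::nat \<Rightarrow> real). 0 \<le> ts 0 \<and> (\<forall>i<n. ts i \<le> ts (Suc i)) \<longrightarrow>
        prob_space.indep_vars M (\<lambda>_. borel) (\<lambda>i \<omega>. X (ts (Suc i)) \<omega> - X (ts i) \<omega>) {..<n}) \<and>
     (\<forall>s\<ge>0. \<forall>t\<ge>0. distr M borel (\<lambda>\<omega>. X (s + t) \<omega> - X s \<omega>) = distr M borel (X t)) \<and>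
     (\<forall>t\<ge>0. \<forall>e>0. ((\<lambda>s. measure M {\<omega> \<in> space M. \<bar>X s \<omega> - X t \<omega>\<bar> > e}) \<longlongrightarrow> 0)
        (at t within {0..})) \<and>
     (AE \<omega> in M. \<forall>t\<ge>0. continuous (at_right t) (\<lambda>s. X s \<omega>) \<and>
        (t > 0 \<longrightarrow> (\<exists>l. ((\<lambda>s. X s \<omega>) \<longlongrightarrow> l) (at_left t))))"

definition conv_in_distr_at_top :: "(real \<Rightarrow> real measure) \<Rightarrow> real measure \<Rightarrow> bool" where
  "conv_in_distr_at_top \<mu>t \<mu> \<longleftrightarrow>
     (\<forall>x. isCont (cdf \<mu>) x \<longrightarrow> ((\<lambda>t. cdf (\<mu>t t) x) \<longlongrightarrow> cdf \<mu> x) at_top)"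

end

theory Submission
  imports Defs "HOL-Real_Asymp.Real_Asymp"
begin

text \<open>The Laplace transform of \<open>\<lambda>\<^sup>1\<^sup>/\<^sup>\<alpha> M(t) / t\<^sup>1\<^sup>/\<^sup>\<alpha>\<close> at \<open>u\<close> is
  \<open>(1 + u\<^sup>\<alpha>/t)\<^sup>-\<^sup>t\<close>, which tends to \<open>e\<^sup>-\<^sup>u\<^sup>\<alpha>\<close>, the Laplace transform of \<open>S\<^sub>\<alpha>(1)\<close>.
  For nonnegative variables this forces convergence in distribution: the Laplace transform
  of \<open>X\<close> at \<open>k \<in> \<nat>\<close> is the \<open>k\<close>-th moment of \<open>e\<^sup>-\<^sup>X \<in> [0,1]\<close>, and these moments determine
  the characteristic function of \<open>e\<^sup>-\<^sup>X\<close> through its power series, so Levy's continuity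
  theorem applies to \<open>e\<^sup>-\<^sup>X\<close> and transfers back along the homeomorphism
  \<open>x \<mapsto> e\<^sup>-\<^sup>x\<close> of \<open>[0,\<infinity>)\<close> onto \<open>(0,1]\<close>. Nonnegativity of \<open>M(t)\<close> is itself read off
  its Laplace transform, which stays bounded by 1.\<close>

definition laplace_transform :: "real measure \<Rightarrow> real \<Rightarrow> real" where
  "laplace_transform \<mu> u = (\<integral>x. exp (- u * x) \<partial>\<mu>)"

lemma (in prob_space) laplace_transform_distr:
  assumes "Z \<in> borel_measurable M"
  shows "laplace_transform (distr M borel Z) u = expectation (\<lambda>\<omega>. exp (- u * Z \<omega>))"
  unfolding laplace_transform_def using assms by (subst integral_distr) auto

context real_distribution
begin

lemma integrable_exp_neg_mult:
  assumes "AE x in M. 0 \<le> x" and "0 \<le> u"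
  shows "integrable M (\<lambda>x. exp (- u * x))"
proof (rule integrable_const_bound)
  show "AE x in M. norm (exp (- u * x)) \<le> 1"
    using assms(1) by eventually_elim (simp add: assms(2))
qed simp

lemma abs_laplace_transform_le_1:
  assumes "AE x in M. 0 \<le> x" and "0 \<le> u"
  shows "\<bar>laplace_transform M u\<bar> \<le> 1"
proof -
  have "laplace_transform M u \<le> (\<integral>x. 1 \<partial>M)"
    unfolding laplace_transform_def using assms
    by (intro integral_mono_AE integrable_exp_neg_mult) (auto elim: eventually_mono)
  then show ?thesis
    using prob_space space_eq_univ by (simp add: laplace_transform_def)
qed

lemma real_distribution_distr_exp_neg: "real_distribution (distr M borel (\<lambda>x. exp (- x)))"
  by (rule real_distribution_distr) simp

lemma integral_distr_exp_neg:
  fixes g :: "real \<Rightarrow> 'b::{banach, second_countable_topology}"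
  assumes "g \<in> borel_measurable borel"
  shows "integral\<^sup>L (distr M borel (\<lambda>x. exp (- x))) g = (\<integral>x. g (exp (- x)) \<partial>M)"
  using assms by (subst integral_distr) auto

lemma emeasure_distr_exp_neg_0: "emeasure (distr M borel (\<lambda>x. exp (- x))) {0} = 0"
proof -
  have "(\<lambda>x::real. exp (- x)) -` {0} = {}" by auto
  then show ?thesis by (subst emeasure_distr) auto
qed

lemma char_distr_exp_neg_sums:
  assumes nonneg: "AE x in M. 0 \<le> x"
  shows "(\<lambda>k. (\<i> * of_real \<theta>) ^ k / fact k * of_real (laplace_transform M k))
           sums char (distr M borel (\<lambda>x. exp (- x))) \<theta>"
proof -
  define f where "f k x = (\<i> * of_real \<theta>) ^ k / fact k * of_real (exp (- real k * x))" for k x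
  have f_eq: "f k x = (\<i> * of_real (\<theta> * exp (- x))) ^ k /\<^sub>R fact k" for k x
  proof -
    have "exp (- real k * x) = exp (- x) ^ k"
      by (subst exp_of_nat_mult[symmetric]) simp
    then show ?thesis
      unfolding f_def by (simp add: power_mult_distrib scaleR_conv_of_real field_simps)
  qed
  have integrable_f: "integrable M (f k)" for k
    unfolding f_def using integrable_exp_neg_mult[OF nonneg, of k] by simp
  have norm_f: "(\<integral>x. norm (f k x) \<partial>M) \<le> \<bar>\<theta>\<bar> ^ k / fact k" for k
  proof -
    have "(\<integral>x. norm (f k x) \<partial>M) = \<bar>\<theta>\<bar> ^ k / fact k * laplace_transform M k"
      unfolding f_def laplace_transform_def by (simp add: norm_mult norm_divide norm_power)
    also have "\<dots> \<le> \<bar>\<theta>\<bar> ^ k / fact k"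
      using abs_laplace_transform_le_1[OF nonneg, of k] by (intro mult_left_le) auto
    finally show ?thesis .
  qed
  have "AE x in M. summable (\<lambda>k. norm (f k x))"
    unfolding f_eq by (intro AE_I2 summable_norm_exp)
  moreover have "summable (\<lambda>k. \<integral>x. norm (f k x) \<partial>M)"
    by (rule summable_comparison_test'[OF summable_exp[of "\<bar>\<theta>\<bar>"]])
      (use norm_f in \<open>simp add: field_simps\<close>)
  ultimately have "(\<lambda>k. integral\<^sup>L M (f k)) sums (\<integral>x. (\<Sum>k. f k x) \<partial>M)"
    by (rule sums_integral[OF integrable_f])
  moreover have "(\<Sum>k. f k x) = iexp (\<theta> * exp (- x))" for x
    unfolding f_eq using exp_converges sums_unique by (metis scaleR_conv_of_real)
  moreover have "integral\<^sup>L M (f k) = (\<i> * of_real \<theta>) ^ k / fact k * of_real (laplace_transform M k)" for k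
    unfolding f_def laplace_transform_def by simp
  ultimately show ?thesis
    unfolding char_def by (simp add: integral_distr_exp_neg)
qed

end

lemma weak_conv_m_of_distr_exp_neg:
  fixes \<mu> :: "nat \<Rightarrow> real measure" and \<nu> :: "real measure"
  assumes \<mu>: "\<And>n. real_distribution (\<mu> n)" and \<nu>: "real_distribution \<nu>"
    and conv: "weak_conv_m (\<lambda>n. distr (\<mu> n) borel (\<lambda>x. exp (- x))) (distr \<nu> borel (\<lambda>x. exp (- x)))"
  shows "weak_conv_m \<mu> \<nu>"
proof (rule integral_bdd_continuous_conv_imp_weak_conv[OF \<mu> \<nu>])
  interpret \<mu>: real_distribution "\<mu> n" for n by fact
  interpret \<nu>: real_distribution \<nu> by fact
  fix f :: "real \<Rightarrow> real"
  assume cont: "\<And>x. isCont f x" and bdd: "\<And>x. \<bar>f x\<bar> \<le> 1"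
  have [measurable]: "f \<in> borel_measurable borel"
    using cont by (auto intro!: borel_measurable_continuous_onI continuous_at_imp_continuous_on)
  define g where "g y = (if 0 < y then f (- ln y) else 0)" for y
  have [measurable]: "g \<in> borel_measurable borel"
    unfolding g_def by measurable
  have "isCont g y" if "y \<noteq> 0" for y
  proof (cases "0 < y")
    case True
    have "eventually (\<lambda>z. g z = f (- ln z)) (nhds y)"
      using eventually_nhds_in_open[of "{0<..}" y] True by (auto simp: g_def elim: eventually_mono)
    moreover have "isCont (\<lambda>z. f (- ln z)) y"
      using True by (intro continuous_intros isCont_o2[OF _ cont]) auto
    ultimately show ?thesis
      by (simp add: isCont_cong)
  next
    case False
    then have "eventually (\<lambda>z. g z = 0) (nhds y)"
      using eventually_nhds_in_open[of "{..<0}" y] that by (auto simp: g_def elim: eventually_mono)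
    then show ?thesis
      by (simp add: isCont_cong)
  qed
  then have "emeasure (distr \<nu> borel (\<lambda>x. exp (- x))) {y. \<not> isCont g y}
      \<le> emeasure (distr \<nu> borel (\<lambda>x. exp (- x))) {0}"
    by (intro emeasure_mono) auto
  then have "emeasure (distr \<nu> borel (\<lambda>x. exp (- x))) {y. \<not> isCont g y} = 0"
    using \<nu>.emeasure_distr_exp_neg_0 by simp
  then have "(\<lambda>n. integral\<^sup>L (distr (\<mu> n) borel (\<lambda>x. exp (- x))) g)
      \<longlonglongrightarrow> integral\<^sup>L (distr \<nu> borel (\<lambda>x. exp (- x))) g"
    using bdd by (intro weak_conv_imp_bdd_ae_continuous_conv[OF \<mu>.real_distribution_distr_exp_neg
          \<nu>.real_distribution_distr_exp_neg conv, where B = 1]) (auto simp: g_def)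
  then show "(\<lambda>n. integral\<^sup>L (\<mu> n) f) \<longlonglongrightarrow> integral\<^sup>L \<nu> f"
    by (simp add: \<mu>.integral_distr_exp_neg \<nu>.integral_distr_exp_neg g_def)
qed

theorem laplace_continuity:
  fixes \<mu> :: "nat \<Rightarrow> real measure" and \<nu> :: "real measure"
  assumes \<mu>: "\<And>n. real_distribution (\<mu> n)" and \<nu>: "real_distribution \<nu>"
    and nonneg_\<mu>: "\<And>n. AE x in \<mu> n. 0 \<le> x" and nonneg_\<nu>: "AE x in \<nu>. 0 \<le> x"
    and conv: "\<And>k::nat. (\<lambda>n. laplace_transform (\<mu> n) k) \<longlonglongrightarrow> laplace_transform \<nu> k"
  shows "weak_conv_m \<mu> \<nu>"
proof (rule weak_conv_m_of_distr_exp_neg[OF \<mu> \<nu> levy_continuity])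
  interpret \<mu>: real_distribution "\<mu> n" for n by fact
  interpret \<nu>: real_distribution \<nu> by fact
  show "real_distribution (distr (\<mu> n) borel (\<lambda>x. exp (- x)))" for n
    by (rule \<mu>.real_distribution_distr_exp_neg)
  show "real_distribution (distr \<nu> borel (\<lambda>x. exp (- x)))"
    by (rule \<nu>.real_distribution_distr_exp_neg)
  fix \<theta>
  define a where "a k n = (\<i> * of_real \<theta>) ^ k / fact k * of_real (laplace_transform (\<mu> n) k)" for k n
  define b where "b k = (\<i> * of_real \<theta>) ^ k / fact k * of_real (laplace_transform \<nu> k)" for k
  have "(\<lambda>n. suminf (\<lambda>k. a k n)) \<longlonglongrightarrow> suminf b"
  proof (rule tannerys_theorem[where M = "\<lambda>k. \<bar>\<theta>\<bar> ^ k / fact k", THEN conjunct2, THEN conjunct2])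
    show "(\<lambda>n. a k n) \<longlonglongrightarrow> b k" for k
      unfolding a_def b_def by (intro tendsto_intros conv)
    show "\<forall>\<^sub>F (k, n) in at_top \<times>\<^sub>F sequentially. norm (a k n) \<le> \<bar>\<theta>\<bar> ^ k / fact k"
    proof (intro always_eventually allI, clarify)
      fix k n
      have "norm (a k n) = \<bar>\<theta>\<bar> ^ k / fact k * \<bar>laplace_transform (\<mu> n) k\<bar>"
        unfolding a_def by (simp add: norm_mult norm_divide norm_power)
      also have "\<dots> \<le> \<bar>\<theta>\<bar> ^ k / fact k"
        by (intro mult_left_le \<mu>.abs_laplace_transform_le_1 nonneg_\<mu>) auto
      finally show "norm (a k n) \<le> \<bar>\<theta>\<bar> ^ k / fact k" .
    qed
    show "summable (\<lambda>k. \<bar>\<theta>\<bar> ^ k / fact k)"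
      using summable_exp[of "\<bar>\<theta>\<bar>"] by (simp add: field_simps)
  qed simp
  then show "(\<lambda>n. char (distr (\<mu> n) borel (\<lambda>x. exp (- x))) \<theta>)
      \<longlonglongrightarrow> char (distr \<nu> borel (\<lambda>x. exp (- x))) \<theta>"
    using \<mu>.char_distr_exp_neg_sums[OF nonneg_\<mu>, of \<theta>] \<nu>.char_distr_exp_neg_sums[OF nonneg_\<nu>, of \<theta>]
    unfolding a_def b_def by (simp add: sums_iff)
qed

lemma (in prob_space) prob_less_neg_eq_0_of_laplace_le_1:
  fixes Z :: "'a \<Rightarrow> real"
  assumes [measurable]: "Z \<in> borel_measurable M" and "0 < \<epsilon>"
    and integrable: "\<And>u. 0 \<le> u \<Longrightarrow> integrable M (\<lambda>\<omega>. exp (- u * Z \<omega>))"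
    and le_1: "\<And>u. 0 \<le> u \<Longrightarrow> expectation (\<lambda>\<omega>. exp (- u * Z \<omega>)) \<le> 1"
  shows "prob {\<omega> \<in> space M. Z \<omega> < - \<epsilon>} = 0"
proof -
  let ?A = "{\<omega> \<in> space M. Z \<omega> < - \<epsilon>}"
  have chernoff: "prob ?A \<le> exp (- u * \<epsilon>)" if "0 \<le> u" for u :: real
  proof -
    have "prob ?A * exp (u * \<epsilon>) = (\<integral>\<omega>. indicator ?A \<omega> * exp (u * \<epsilon>) \<partial>M)"
      by simp
    also have "\<dots> \<le> expectation (\<lambda>\<omega>. exp (- u * Z \<omega>))"
    proof (rule integral_mono[OF _ integrable[OF that]])
      show "integrable M (\<lambda>\<omega>. indicator ?A \<omega> * exp (u * \<epsilon>))"
        by (intro integrable_mult_left integrable_real_indicator) (auto simp: emeasure_eq_measure)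
      show "indicator ?A \<omega> * exp (u * \<epsilon>) \<le> exp (- u * Z \<omega>)" for \<omega>
        using mult_left_mono[of \<epsilon> "- Z \<omega>" u] that by (auto simp: indicator_def)
    qed
    also have "\<dots> \<le> 1"
      using le_1[OF that] .
    finally show ?thesis
      by (simp add: exp_minus field_simps)
  qed
  have "((\<lambda>u. exp (- u * \<epsilon>)) \<longlongrightarrow> 0) at_top"
    using \<open>0 < \<epsilon>\<close> by real_asymp
  then have "prob ?A \<le> 0"
    using chernoff by (intro tendsto_lowerbound) (auto simp: eventually_at_top_linorder intro!: exI[of _ 0])
  then show ?thesis
    using measure_nonneg antisym by blast
qed

lemma (in prob_space) AE_nonneg_of_laplace_le_1:
  fixes Z :: "'a \<Rightarrow> real"
  assumes [measurable]: "Z \<in> borel_measurable M"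
    and "\<And>u. 0 \<le> u \<Longrightarrow> integrable M (\<lambda>\<omega>. exp (- u * Z \<omega>))"
    and "\<And>u. 0 \<le> u \<Longrightarrow> expectation (\<lambda>\<omega>. exp (- u * Z \<omega>)) \<le> 1"
  shows "AE \<omega> in M. 0 \<le> Z \<omega>"
proof -
  have "AE \<omega> in M. \<forall>m. - inverse (real (Suc m)) \<le> Z \<omega>"
    using assms prob_less_neg_eq_0_of_laplace_le_1[of Z "inverse (real (Suc m))" for m]
    unfolding AE_all_countable by (subst (asm) prob_eq_0) (auto simp: not_less)
  then show ?thesis
  proof eventually_elim
    case (elim \<omega>)
    show "0 \<le> Z \<omega>"
    proof (rule ccontr)
      assume "\<not> 0 \<le> Z \<omega>"
      then obtain m where "inverse (real (Suc m)) < - Z \<omega>"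
        using reals_Archimedean[of "- Z \<omega>"] by auto
      with elim show False
        by (metis minus_le_iff not_less)
    qed
  qed
qed

lemma conv_in_distr_at_top_sequentially:
  assumes "\<And>s. filterlim s at_top sequentially \<Longrightarrow> (\<And>n. 0 < s n) \<Longrightarrow> weak_conv_m (\<lambda>n. \<mu>t (s n)) \<mu>"
  shows "conv_in_distr_at_top \<mu>t \<mu>"
  unfolding conv_in_distr_at_top_def
proof (intro allI impI tendsto_at_topI_sequentially)
  fix x and s :: "nat \<Rightarrow> real"
  assume cont: "isCont (cdf \<mu>) x" and s: "filterlim s at_top sequentially"
  define s' where "s' n = max (s n) 1" for n
  have "filterlim s' at_top sequentially"
    by (rule filterlim_at_top_mono[OF s]) (simp add: s'_def)
  then have "(\<lambda>n. cdf (\<mu>t (s' n)) x) \<longlonglongrightarrow> cdf \<mu> x"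
    using assms[of s'] cont unfolding weak_conv_m_def weak_conv_def by (simp add: s'_def)
  moreover have "eventually (\<lambda>n. cdf (\<mu>t (s' n)) x = cdf (\<mu>t (s n)) x) sequentially"
    using s unfolding filterlim_at_top by (auto simp: s'_def elim!: allE[of _ 1] eventually_mono)
  ultimately show "(\<lambda>n. cdf (\<mu>t (s n)) x) \<longlonglongrightarrow> cdf \<mu> x"
    by (rule Lim_transform_eventually)
qed

theorem laplace_continuity_at_top:
  fixes \<mu> :: "real \<Rightarrow> real measure" and \<nu> :: "real measure"
  assumes "\<And>t. 0 < t \<Longrightarrow> real_distribution (\<mu> t)" and "real_distribution \<nu>"
    and "\<And>t. 0 < t \<Longrightarrow> AE x in \<mu> t. 0 \<le> x" and "AE x in \<nu>. 0 \<le> x"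
    and conv: "\<And>k::nat. ((\<lambda>t. laplace_transform (\<mu> t) k) \<longlongrightarrow> laplace_transform \<nu> k) at_top"
  shows "conv_in_distr_at_top \<mu> \<nu>"
proof (rule conv_in_distr_at_top_sequentially)
  fix s :: "nat \<Rightarrow> real"
  assume "filterlim s at_top sequentially" and "\<And>n. 0 < s n"
  then show "weak_conv_m (\<lambda>n. \<mu> (s n)) \<nu>"
    using assms filterlim_compose[OF conv] by (intro laplace_continuity) auto
qed

lemma tendsto_one_plus_div_powr_neg_at_top:
  fixes a :: real
  shows "((\<lambda>t. (1 + a / t) powr (- t)) \<longlongrightarrow> exp (- a)) at_top"
  using tendsto_inverse[OF tendsto_exp_limit_at_top[of a]] by (simp add: powr_minus exp_minus)

lemma (in prob_space) laplace_transform_rescaled_mittag_leffler: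
  fixes Z :: "'a \<Rightarrow> real"
  assumes [measurable]: "Z \<in> borel_measurable M"
    and "0 < \<alpha>" "0 < lam" "0 < t" "0 \<le> u"
    and laplace_Z: "\<And>v. 0 \<le> v \<Longrightarrow> expectation (\<lambda>\<omega>. exp (- v * Z \<omega>)) = (lam / (lam + v powr \<alpha>)) powr t"
  shows "laplace_transform (distr M borel (\<lambda>\<omega>. lam powr (1 / \<alpha>) * Z \<omega> / t powr (1 / \<alpha>))) u
           = (1 + u powr \<alpha> / t) powr (- t)"
proof -
  define v where "v = u * lam powr (1 / \<alpha>) / t powr (1 / \<alpha>)"
  have "0 \<le> v"
    using assms by (simp add: v_def)
  have "v powr \<alpha> = u powr \<alpha> * lam / t"
    using assms by (simp add: v_def powr_divide powr_mult powr_powr)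
  have "laplace_transform (distr M borel (\<lambda>\<omega>. lam powr (1 / \<alpha>) * Z \<omega> / t powr (1 / \<alpha>))) u
      = expectation (\<lambda>\<omega>. exp (- v * Z \<omega>))"
    by (simp add: laplace_transform_distr v_def mult.assoc)
  also have "\<dots> = (lam / (lam + v powr \<alpha>)) powr t"
    using laplace_Z[OF \<open>0 \<le> v\<close>] .
  also have "lam + v powr \<alpha> = lam * (1 + u powr \<alpha> / t)"
    unfolding \<open>v powr \<alpha> = u powr \<alpha> * lam / t\<close> by (simp add: distrib_left)
  also have "lam / (lam * (1 + u powr \<alpha> / t)) = inverse (1 + u powr \<alpha> / t)"
    using \<open>0 < lam\<close> by (simp add: inverse_eq_divide)
  finally show ?thesis
    by (simp add: powr_minus inverse_powr add_nonneg_nonneg)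
qed

lemma (in prob_space) mittag_leffler_marginal_nonneg:
  fixes Z :: "'a \<Rightarrow> real"
  assumes "Z \<in> borel_measurable M" and "0 < lam" and "0 \<le> t"
    and laplace_Z: "\<And>v. 0 \<le> v \<Longrightarrow> expectation (\<lambda>\<omega>. exp (- v * Z \<omega>)) = (lam / (lam + v powr \<alpha>)) powr t"
  shows "AE \<omega> in M. 0 \<le> Z \<omega>"
proof (rule AE_nonneg_of_laplace_le_1[OF assms(1)])
  fix u :: real
  assume "0 \<le> u"
  have "0 < lam + u powr \<alpha>"
    using \<open>0 < lam\<close> powr_ge_zero[of u \<alpha>] by linarith
  then have "0 < expectation (\<lambda>\<omega>. exp (- u * Z \<omega>))"
    and le_1: "expectation (\<lambda>\<omega>. exp (- u * Z \<omega>)) \<le> 1"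
    using \<open>0 < lam\<close> \<open>0 \<le> t\<close> laplace_Z[OF \<open>0 \<le> u\<close>] by (auto simp: powr_le1)
  then show "integrable M (\<lambda>\<omega>. exp (- u * Z \<omega>))"
    using not_integrable_integral_eq by fastforce
  show "expectation (\<lambda>\<omega>. exp (- u * Z \<omega>)) \<le> 1"
    by (fact le_1)
qed

theorem mainTheorem1:
  fixes \<alpha> lam :: real
    and M :: "'a measure" and X :: "real \<Rightarrow> 'a \<Rightarrow> real"
    and N :: "'b measure" and S :: "'b \<Rightarrow> real"
  assumes "0 < \<alpha>" and "\<alpha> < 1" and "0 < lam"
    and "levy_process M X"
    and "\<And>u t. 0 \<le> u \<Longrightarrow> 0 \<le> t \<Longrightarrow>
           prob_space.expectation M (\<lambda>\<omega>. exp (- u * X t \<omega>)) = (lam / (lam + u powr \<alpha>)) powr t"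
    and "prob_space N" and "S \<in> borel_measurable N"
    and "AE \<omega> in N. S \<omega> > 0"
    and "\<And>u. 0 \<le> u \<Longrightarrow> prob_space.expectation N (\<lambda>\<omega>. exp (- u * S \<omega>)) = exp (- (u powr \<alpha>))"
  shows "conv_in_distr_at_top
           (\<lambda>t. distr M borel (\<lambda>\<omega>. lam powr (1 / \<alpha>) * X t \<omega> / t powr (1 / \<alpha>)))
           (distr N borel S)"
proof -
  interpret M: prob_space M
    using \<open>levy_process M X\<close> by (simp add: levy_process_def)
  interpret N: prob_space N by fact
  have X_meas[measurable]: "X t \<in> borel_measurable M" if "0 \<le> t" for t
    using \<open>levy_process M X\<close> that by (simp add: levy_process_def)
  note [measurable] = \<open>S \<in> borel_measurable N\<close>
  let ?Y = "\<lambda>t. distr M borel (\<lambda>\<omega>. lam powr (1 / \<alpha>) * X t \<omega> / t powr (1 / \<alpha>))"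
  show ?thesis
  proof (rule laplace_continuity_at_top)
    fix t :: real
    assume "0 < t"
    then show "real_distribution (?Y t)"
      by (intro M.real_distribution_distr) simp
    have "AE \<omega> in M. 0 \<le> X t \<omega>"
      using \<open>0 < lam\<close> \<open>0 < t\<close> assms(5) by (intro M.mittag_leffler_marginal_nonneg) auto
    then show "AE x in ?Y t. 0 \<le> x"
      using \<open>0 < t\<close> \<open>0 < lam\<close> by (subst AE_distr_iff) (auto elim!: eventually_mono)
  next
    show "real_distribution (distr N borel S)"
      by (intro N.real_distribution_distr) simp
    show "AE x in distr N borel S. 0 \<le> x"
      using \<open>AE \<omega> in N. S \<omega> > 0\<close> by (subst AE_distr_iff) (auto elim!: eventually_mono)
  next
    fix k :: nat
    have "eventually (\<lambda>t. (1 + k powr \<alpha> / t) powr (- t) = laplace_transform (?Y t) k) at_top"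
      using eventually_gt_at_top[of 0]
    proof eventually_elim
      case (elim t)
      then show ?case
        using assms(1,3,5) by (intro M.laplace_transform_rescaled_mittag_leffler[symmetric]) auto
    qed
    moreover have "laplace_transform (distr N borel S) k = exp (- (k powr \<alpha>))"
      using assms(9) by (simp add: N.laplace_transform_distr)
    ultimately show "((\<lambda>t. laplace_transform (?Y t) k) \<longlongrightarrow> laplace_transform (distr N borel S) k) at_top"
      using Lim_transform_eventually[OF tendsto_one_plus_div_powr_neg_at_top] by simp
  qed
qed

end
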